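(* Let $0<\lambda<4$ and $\theta\in(0,1)$. There exist constants $T_1=T_1(\lambda,\theta)>0$, $N_2=N_2(\lambda,\theta)$, $C_2=C_2(\lambda,\theta)>0$ and $C_3=C_3(\lambda,\theta)$ such that for every $n\ge N_2$, \[ P^{n,0}_{\lambda,n}\Big(\sup_{0\le t\le C_2\sqrt n}\frac{\|(B_{T_1+t},G_{T_1+t})\|_1}{n}\ge\frac{\theta}{(3+\theta)\lambda}\Big)\le\frac{C_3}{\sqrt n}. \]
   Context: Fix $n\ge1$ and $\lambda>0$. $(B_t,G_t)_{t\ge0}$ is the continuous-time Markov chain on $\{(B,G)\in\mathbb{Z}_{\ge0}^2:B+G\le n\}$ with transitions: - $(B,G)\to(B-1,G)$ at rate $B$; - $(B,G)\to(B,G-1)$ at rate $G$; - $(B,G)\to(B+1,G-1)$ at rate $\frac{\lambda}{n}BG$; - $(B,G)\to(B,G+1)$ at rate $\frac{\lambda}{n}B(n-B-G)$. These are the counts of wholly- and semi-infected vertices in the contact process with semi-infected state on the complete graph with $n$ vertices. $P^{n,0}_{\lambda,n}$ is its law with $(B_0,G_0)=(n,0)$. $\|(x,y)\|_1=|x|+|y|$. *)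

theory Defs
  imports "HOL-Probability.Probability"
begin

text \<open>
  Continuous-time Markov chain of the contact process with semi-infected state
  on the complete graph K_n, constructed pathwise in the standard way
  (jump chain + exponential holding times) from an i.i.d. sequence of pairs
  (E_k, U_k) with E_k ~ Exp(1) and U_k ~ Uniform[0,1], all independent.
\<close>

type_synonym cstate = "nat \<times> nat"

definition csi_trans :: "nat \<Rightarrow> real \<Rightarrow> cstate \<Rightarrow> (real \<times> cstate) list" where
  "csi_trans n lam s = (case s of (B, G) \<Rightarrow>
     [ (real B, (B - 1, G)),
       (real G, (B, G - 1)),
       (lam / real n * real B * real G, (B + 1, G - 1)),
       (lam / real n * real B * (real n - real B - real G), (B, G + 1)) ])"

definition csi_qtot :: "nat \<Rightarrow> real \<Rightarrow> cstate \<Rightarrow> real" where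
  "csi_qtot n lam s = sum_list (map fst (csi_trans n lam s))"

fun csi_select :: "real \<Rightarrow> (real \<times> cstate) list \<Rightarrow> cstate \<Rightarrow> cstate" where
  "csi_select u [] s = s"
| "csi_select u ((r, t) # xs) s = (if u < r then t else csi_select (u - r) xs s)"

definition csi_step :: "nat \<Rightarrow> real \<Rightarrow> cstate \<Rightarrow> real \<Rightarrow> cstate" where
  "csi_step n lam s u =
     (if csi_qtot n lam s = 0 then s
      else csi_select (u * csi_qtot n lam s) (csi_trans n lam s) s)"

text \<open>Holding time in state s driven by an Exp(1) variable e (absorbing: dummy time 1).\<close>
definition csi_hold :: "nat \<Rightarrow> real \<Rightarrow> cstate \<Rightarrow> real \<Rightarrow> real" where
  "csi_hold n lam s e = (if csi_qtot n lam s = 0 then 1 else e / csi_qtot n lam s)"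

definition csi_space :: "(nat \<Rightarrow> real \<times> real) measure" where
  "csi_space = PiM UNIV (\<lambda>_::nat.
      density lborel (exponential_density 1) \<Otimes>\<^sub>M uniform_measure lborel {0..1::real})"

fun csi_jump :: "nat \<Rightarrow> real \<Rightarrow> cstate \<Rightarrow> (nat \<Rightarrow> real \<times> real) \<Rightarrow> nat \<Rightarrow> cstate" where
  "csi_jump n lam s0 \<omega> 0 = s0"
| "csi_jump n lam s0 \<omega> (Suc k) = csi_step n lam (csi_jump n lam s0 \<omega> k) (snd (\<omega> k))"

fun csi_time :: "nat \<Rightarrow> real \<Rightarrow> cstate \<Rightarrow> (nat \<Rightarrow> real \<times> real) \<Rightarrow> nat \<Rightarrow> real" where
  "csi_time n lam s0 \<omega> 0 = 0"
| "csi_time n lam s0 \<omega> (Suc k) =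
     csi_time n lam s0 \<omega> k + csi_hold n lam (csi_jump n lam s0 \<omega> k) (fst (\<omega> k))"

text \<open>The process (B_t, G_t) (right-continuous; arbitrary value (0,0) after an
  explosion, which has probability zero).\<close>
definition csi_proc :: "nat \<Rightarrow> real \<Rightarrow> cstate \<Rightarrow> (nat \<Rightarrow> real \<times> real) \<Rightarrow> real \<Rightarrow> cstate" where
  "csi_proc n lam s0 \<omega> t =
     (if \<exists>k. t < csi_time n lam s0 \<omega> k
      then csi_jump n lam s0 \<omega> ((LEAST k. t < csi_time n lam s0 \<omega> k) - 1)
      else (0, 0))"

end

theory Submission
  imports Defs "HOL-Real_Asymp.Real_Asymp"
begin

text \<open>
  The function \<open>f(B, G) = (2 + \<lambda>/2) B + G - \<lambda> B\<^sup>2 / (2 n)\<close> lies between \<open>B + G\<close> and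
  \<open>4 (B + G)\<close>, and for \<open>\<lambda> < 4\<close> each jump decreases it in mean by a fixed multiple of the
  total jump rate. Hence for small \<open>b > 0\<close> the quantity \<open>exp (b f)\<close>, compensated by a constant
  factor per jump, is a supermartingale along the embedded jump chain, and Ville's inequality
  shows that the chain started at \<open>(n, 0)\<close> is exponentially unlikely to have size \<open>\<ge> \<alpha> n\<close>
  after some \<open>m = O(n)\<close> jumps, or to regain size \<open>\<alpha> n\<close> after dropping below \<open>\<alpha> n / 8\<close>.
  Otherwise the first \<open>m\<close> jumps all leave states of total rate \<open>\<ge> \<alpha> n / 8\<close>, so they occur
  before a time \<open>T\<close> unless \<open>m\<close> independent exponential clocks sum to at least \<open>T \<alpha> n / 8\<close>, which
  a Chernoff bound excludes. So with probability \<open>1 - O(exp (- c n))\<close> the size stays below \<open>\<alpha> n\<close>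
  at all times after \<open>T\<close>; only \<open>\<alpha> = \<theta> / ((3 + \<theta>) \<lambda>) > 0\<close> is used, not \<open>\<theta> < 1\<close>.
\<close>

definition csi_marginal :: "(real \<times> real) measure" where
  "csi_marginal = density lborel (exponential_density 1) \<Otimes>\<^sub>M uniform_measure lborel {0..1::real}"

lemma csi_space_eq_PiM: "csi_space = PiM UNIV (\<lambda>_. csi_marginal)"
  by (simp add: csi_space_def csi_marginal_def)

lemma prob_space_csi_marginal: "prob_space csi_marginal"
  unfolding csi_marginal_def
  by (intro prob_space_pair prob_space_exponential_density prob_space_uniform_measure) auto

lemma sequence_space_csi_marginal: "sequence_space csi_marginal"
  unfolding sequence_space_def product_prob_space_def product_prob_space_axioms_def
    product_sigma_finite_def
  using prob_space_csi_marginal by (auto simp: prob_space_imp_sigma_finite)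

lemma prob_space_csi_space: "prob_space csi_space"
proof -
  interpret S: sequence_space csi_marginal by (rule sequence_space_csi_marginal)
  show ?thesis unfolding csi_space_eq_PiM by (rule S.prob_space_axioms)
qed

lemma nn_integral_csi_space_case_nat:
  assumes [measurable]: "F \<in> borel_measurable csi_space"
  shows "(\<integral>\<^sup>+\<omega>. F \<omega> \<partial>csi_space) = (\<integral>\<^sup>+w. \<integral>\<^sup>+\<omega>. F (case_nat w \<omega>) \<partial>csi_space \<partial>csi_marginal)"
proof -
  interpret S: sequence_space csi_marginal by (rule sequence_space_csi_marginal)
  interpret P: pair_sigma_finite csi_marginal "\<Pi>\<^sub>M i::nat\<in>UNIV. csi_marginal" ..
  have F[measurable]: "F \<in> borel_measurable S.S" using assms unfolding csi_space_eq_PiM .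
  have "(\<integral>\<^sup>+\<omega>. F \<omega> \<partial>S.S)
      = (\<integral>\<^sup>+X. F ((\<lambda>(s, \<omega>). case_nat s \<omega>) X) \<partial>(csi_marginal \<Otimes>\<^sub>M S.S))"
    by (subst S.PiM_iter[symmetric]) (simp add: nn_integral_distr)
  also have "\<dots> = (\<integral>\<^sup>+w. \<integral>\<^sup>+\<omega>. F ((\<lambda>(s, \<omega>). case_nat s \<omega>) (w, \<omega>)) \<partial>S.S \<partial>csi_marginal)"
    by (subst S.nn_integral_fst) simp_all
  finally show ?thesis unfolding csi_space_eq_PiM by simp
qed

lemma measurable_csi_coord [measurable]: "(\<lambda>\<omega>. \<omega> i) \<in> measurable csi_space csi_marginal"
  unfolding csi_space_eq_PiM by (rule measurable_component_singleton) simp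

lemma measurable_fst_csi_marginal [measurable]: "fst \<in> borel_measurable csi_marginal"
  unfolding csi_marginal_def by (rule measurable_fst'') simp

lemma measurable_snd_csi_marginal [measurable]: "snd \<in> borel_measurable csi_marginal"
  unfolding csi_marginal_def by (rule measurable_snd'') simp

text \<open>Defined by consuming the head of the noise sequence, so that the first step separates off as
  in \<open>nn_integral_csi_space_case_nat\<close>; \<open>noise_chain_Suc\<close> is the usual recursion.\<close>
fun noise_chain :: "('s \<Rightarrow> real \<times> real \<Rightarrow> 's) \<Rightarrow> 's \<Rightarrow> (nat \<Rightarrow> real \<times> real) \<Rightarrow> nat \<Rightarrow> 's" where
  "noise_chain st y \<omega> 0 = y"
| "noise_chain st y \<omega> (Suc k) = noise_chain st (st y (\<omega> 0)) (\<lambda>i. \<omega> (Suc i)) k"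

lemma noise_chain_Suc: "noise_chain st y \<omega> (Suc k) = st (noise_chain st y \<omega> k) (\<omega> k)"
proof (induction k arbitrary: y \<omega>)
  case (Suc k)
  have "noise_chain st y \<omega> (Suc (Suc k))
      = noise_chain st (st y (\<omega> 0)) (\<lambda>i. \<omega> (Suc i)) (Suc k)"
    by (simp only: noise_chain.simps)
  also have "\<dots> = st (noise_chain st (st y (\<omega> 0)) (\<lambda>i. \<omega> (Suc i)) k) (\<omega> (Suc k))"
    by (rule Suc.IH)
  also have "\<dots> = st (noise_chain st y \<omega> (Suc k)) (\<omega> (Suc k))"
    by (simp only: noise_chain.simps)
  finally show ?case .
qed simp

declare noise_chain.simps(2) [simp del]

lemma noise_chain_case_nat: "noise_chain st y (case_nat w \<omega>) (Suc k) = noise_chain st (st y w) \<omega> k"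
  by (simp add: noise_chain.simps(2))

lemma measurable_noise_chain [measurable]:
  fixes st :: "'s::countable \<Rightarrow> real \<times> real \<Rightarrow> 's"
  assumes "\<And>y. st y \<in> measurable csi_marginal (count_space UNIV)"
  shows "(\<lambda>\<omega>. noise_chain st y \<omega> k) \<in> measurable csi_space (count_space UNIV)"
proof (induction k)
  case (Suc k)
  have "(\<lambda>\<omega>. st (noise_chain st y \<omega> k) (\<omega> k)) \<in> measurable csi_space (count_space UNIV)"
    by (rule measurable_compose_countable[where f = "\<lambda>s \<omega>. st s (\<omega> k)"])
       (auto intro: measurable_compose[OF measurable_csi_coord assms] Suc)
  then show ?case by (simp only: noise_chain_Suc)
qed simp

lemma nn_integral_noise_chain_le:
  fixes \<phi> :: "'s \<Rightarrow> ennreal"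
  assumes inv: "\<And>y w. y \<in> S \<Longrightarrow> st y w \<in> S"
    and meas: "\<And>y k. y \<in> S \<Longrightarrow> (\<lambda>\<omega>. \<phi> (noise_chain st y \<omega> k)) \<in> borel_measurable csi_space"
    and super: "\<And>y. y \<in> S \<Longrightarrow> (\<integral>\<^sup>+w. \<phi> (st y w) \<partial>csi_marginal) \<le> \<phi> y"
    and "y \<in> S"
  shows "(\<integral>\<^sup>+\<omega>. \<phi> (noise_chain st y \<omega> k) \<partial>csi_space) \<le> \<phi> y"
  using \<open>y \<in> S\<close>
proof (induction k arbitrary: y)
  case 0
  interpret prob_space csi_space by (rule prob_space_csi_space)
  show ?case by (simp add: emeasure_space_1)
next
  case (Suc k)
  have "(\<integral>\<^sup>+\<omega>. \<phi> (noise_chain st y \<omega> (Suc k)) \<partial>csi_space)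
      = (\<integral>\<^sup>+w. \<integral>\<^sup>+\<omega>. \<phi> (noise_chain st (st y w) \<omega> k) \<partial>csi_space \<partial>csi_marginal)"
    by (simp add: nn_integral_csi_space_case_nat[OF meas[OF Suc.prems]] noise_chain_case_nat)
  also have "\<dots> \<le> (\<integral>\<^sup>+w. \<phi> (st y w) \<partial>csi_marginal)"
    by (intro nn_integral_mono Suc.IH inv Suc.prems)
  also have "\<dots> \<le> \<phi> y" by (rule super[OF Suc.prems])
  finally show ?case .
qed

definition stop_when :: "('s \<Rightarrow> bool) \<Rightarrow> ('s \<Rightarrow> 'w \<Rightarrow> 's) \<Rightarrow> 's \<Rightarrow> 'w \<Rightarrow> 's" where
  "stop_when P st y w = (if P y then y else st y w)"

lemma noise_chain_stop_when_eq:
  "\<forall>j<k. \<not> P (noise_chain st y \<omega> j) \<Longrightarrow> noise_chain (stop_when P st) y \<omega> k = noise_chain st y \<omega> k"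
  by (induction k) (auto simp: noise_chain_Suc stop_when_def)

lemma noise_chain_stop_when_iff:
  "P (noise_chain (stop_when P st) y \<omega> k) \<longleftrightarrow> (\<exists>j\<le>k. P (noise_chain st y \<omega> j))"
proof (induction k)
  case (Suc k)
  show ?case
  proof (cases "\<exists>j\<le>k. P (noise_chain st y \<omega> j)")
    case True
    then show ?thesis using Suc.IH by (force simp: noise_chain_Suc stop_when_def le_Suc_eq)
  next
    case False
    then have "noise_chain (stop_when P st) y \<omega> (Suc k) = noise_chain st y \<omega> (Suc k)"
      by (intro noise_chain_stop_when_eq) auto
    moreover have "(\<exists>j\<le>Suc k. P (noise_chain st y \<omega> j)) \<longleftrightarrow> P (noise_chain st y \<omega> (Suc k))"
      using False by (auto simp: le_Suc_eq)
    ultimately show ?thesis by simp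
  qed
qed simp

lemma measure_noise_chain_ge_le:
  fixes st :: "'s::countable \<Rightarrow> real \<times> real \<Rightarrow> 's" and \<phi> :: "'s \<Rightarrow> real"
  assumes inv: "\<And>y w. y \<in> S \<Longrightarrow> st y w \<in> S"
    and meas: "\<And>y. st y \<in> measurable csi_marginal (count_space UNIV)"
    and nonneg: "\<And>y. 0 \<le> \<phi> y"
    and super: "\<And>y. y \<in> S \<Longrightarrow> (\<integral>\<^sup>+w. \<phi> (st y w) \<partial>csi_marginal) \<le> \<phi> y"
    and "y \<in> S" and "0 < a"
  shows "a * measure csi_space {\<omega>\<in>space csi_space. a \<le> \<phi> (noise_chain st y \<omega> k)} \<le> \<phi> y"
proof -
  interpret prob_space csi_space by (rule prob_space_csi_space)
  have chain_meas: "(\<lambda>\<omega>. noise_chain st z \<omega> k) \<in> measurable csi_space (count_space UNIV)" for z k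
    by (rule measurable_noise_chain[OF meas])
  have "{\<omega>\<in>space csi_space. a \<le> \<phi> (noise_chain st y \<omega> k)} \<in> sets csi_space"
    using chain_meas[of y k] by measurable
  then have "ennreal (a * measure csi_space {\<omega>\<in>space csi_space. a \<le> \<phi> (noise_chain st y \<omega> k)})
      = (\<integral>\<^sup>+\<omega>. ennreal a * indicator {\<omega>\<in>space csi_space. a \<le> \<phi> (noise_chain st y \<omega> k)} \<omega> \<partial>csi_space)"
    using \<open>0 < a\<close> by (simp add: ennreal_mult emeasure_eq_measure nn_integral_cmult_indicator)
  also have "\<dots> \<le> (\<integral>\<^sup>+\<omega>. \<phi> (noise_chain st y \<omega> k) \<partial>csi_space)"
    by (intro nn_integral_mono) (auto split: split_indicator intro: ennreal_leI)
  also have "\<dots> \<le> \<phi> y"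
  proof (rule nn_integral_noise_chain_le[where S = S, OF inv _ super \<open>y \<in> S\<close>])
    show "(\<lambda>\<omega>. ennreal (\<phi> (noise_chain st z \<omega> k))) \<in> borel_measurable csi_space" for z k
      using chain_meas[of z k] by measurable
  qed
  finally show ?thesis using nonneg by simp
qed

text \<open>Ville's maximal inequality for the nonnegative supermartingale \<open>\<phi> (chain)\<close>: Markov's
  inequality for the chain stopped on reaching level \<open>a\<close>, at times tending to infinity.\<close>
lemma measure_noise_chain_hits_le:
  fixes st :: "'s::countable \<Rightarrow> real \<times> real \<Rightarrow> 's" and \<phi> :: "'s \<Rightarrow> real"
  assumes inv: "\<And>y w. y \<in> S \<Longrightarrow> st y w \<in> S"
    and meas: "\<And>y. st y \<in> measurable csi_marginal (count_space UNIV)"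
    and nonneg: "\<And>y. 0 \<le> \<phi> y"
    and super: "\<And>y. y \<in> S \<Longrightarrow> (\<integral>\<^sup>+w. \<phi> (st y w) \<partial>csi_marginal) \<le> \<phi> y"
    and "y \<in> S" and "0 < a"
    and hits: "E \<subseteq> {\<omega>\<in>space csi_space. \<exists>k. a \<le> \<phi> (noise_chain st y \<omega> k)}"
  shows "measure csi_space E \<le> \<phi> y / a"
proof -
  interpret prob_space csi_space by (rule prob_space_csi_space)
  interpret M: prob_space csi_marginal by (rule prob_space_csi_marginal)
  define P where "P z \<longleftrightarrow> a \<le> \<phi> z" for z
  define st' where "st' = stop_when P st"
  have meas': "\<And>y. st' y \<in> measurable csi_marginal (count_space UNIV)"
    using meas unfolding st'_def stop_when_def by simp
  define Hit where "Hit k = {\<omega>\<in>space csi_space. P (noise_chain st' y \<omega> k)}" for k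
  have Hit_sets: "Hit k \<in> sets csi_space" for k
  proof -
    have "(\<lambda>\<omega>. noise_chain st' y \<omega> k) \<in> measurable csi_space (count_space UNIV)"
      by (rule measurable_noise_chain[OF meas'])
    then show ?thesis unfolding Hit_def P_def by measurable
  qed
  have "a * measure csi_space (Hit k) \<le> \<phi> y" for k
    unfolding Hit_def P_def
  proof (rule measure_noise_chain_ge_le[where S = S, OF _ meas' nonneg _ \<open>y \<in> S\<close> \<open>0 < a\<close>])
    show "st' z w \<in> S" if "z \<in> S" for z w using inv that by (simp add: st'_def stop_when_def)
    show "(\<integral>\<^sup>+w. \<phi> (st' z w) \<partial>csi_marginal) \<le> \<phi> z" if "z \<in> S" for z
      using super[OF that] by (cases "P z") (simp_all add: st'_def stop_when_def M.emeasure_space_1)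
  qed
  moreover have "incseq Hit"
    unfolding incseq_def Hit_def st'_def noise_chain_stop_when_iff
    by (auto intro: order_trans)
  then have "(\<lambda>k. measure csi_space (Hit k)) \<longlonglongrightarrow> measure csi_space (\<Union>k. Hit k)"
    using Hit_sets by (intro finite_Lim_measure_incseq) auto
  ultimately have "a * measure csi_space (\<Union>k. Hit k) \<le> \<phi> y"
    by (intro LIMSEQ_le_const2[where X = "\<lambda>k. a * measure csi_space (Hit k)"] tendsto_mult) auto
  moreover have "E \<subseteq> (\<Union>k. Hit k)"
    using hits by (force simp: Hit_def st'_def noise_chain_stop_when_iff P_def)
  then have "measure csi_space E \<le> measure csi_space (\<Union>k. Hit k)"
    using Hit_sets by (intro finite_measure_mono) auto
  ultimately have "a * measure csi_space E \<le> \<phi> y"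
    using \<open>0 < a\<close> by (smt (verit) mult_left_mono)
  then show ?thesis using \<open>0 < a\<close> by (simp add: le_divide_eq mult.commute)
qed

abbreviation csi_size :: "cstate \<Rightarrow> nat" where
  "csi_size s \<equiv> fst s + snd s"

lemma measurable_csi_select [measurable]:
  "(\<lambda>v. csi_select v xs s) \<in> measurable borel (count_space UNIV)"
proof (induction xs)
  case (Cons p xs)
  obtain r t where p: "p = (r, t)" by (cases p)
  have m: "(\<lambda>v. csi_select (v - r) xs s) \<in> measurable borel (count_space UNIV)"
    by (rule measurable_compose[OF _ Cons]) simp
  have "(\<lambda>v. if v < r then t else csi_select (v - r) xs s) \<in> measurable borel (count_space UNIV)"
    by (rule measurable_If[OF measurable_const m]) measurable
  then show ?case by (simp add: p)
qed simp

lemma nn_integral_csi_select: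
  fixes g :: "cstate \<Rightarrow> real"
  assumes "\<forall>p\<in>set xs. 0 \<le> fst p" and g: "\<And>t. 0 \<le> g t"
  shows "(\<integral>\<^sup>+v. indicator {c..<c + sum_list (map fst xs)} v * ennreal (g (csi_select (v - c) xs s)) \<partial>lborel)
     = ennreal (sum_list (map (\<lambda>(r, t). r * g t) xs))"
  using assms(1)
proof (induction xs arbitrary: c)
  case (Cons p xs)
  obtain r t where p: "p = (r, t)" by (cases p)
  define R where "R = sum_list (map fst xs)"
  have r0: "0 \<le> r" using Cons.prems p by auto
  have R0: "0 \<le> R" unfolding R_def using Cons.prems by (intro sum_list_nonneg) auto
  have "(\<lambda>v. csi_select (v - (c + r)) xs s) \<in> measurable borel (count_space UNIV)"
    by (rule measurable_compose[OF _ measurable_csi_select]) simp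
  then have [measurable]: "(\<lambda>v. ennreal (g (csi_select (v - (c + r)) xs s))) \<in> borel_measurable borel"
    by (rule measurable_compose) simp
  have "(\<integral>\<^sup>+v. indicator {c..<c + sum_list (map fst (p # xs))} v * ennreal (g (csi_select (v - c) (p # xs) s)) \<partial>lborel)
      = (\<integral>\<^sup>+v. ennreal (g t) * indicator {c..<c + r} v
           + indicator {c + r..<c + r + R} v * ennreal (g (csi_select (v - (c + r)) xs s)) \<partial>lborel)"
    using r0 R0 by (intro nn_integral_cong) (auto simp: p R_def split: split_indicator simp: algebra_simps)
  also have "\<dots> = ennreal (g t) * ennreal r + ennreal (sum_list (map (\<lambda>(r, t). r * g t) xs))"
    using Cons.IH[of "c + r"] Cons.prems r0
    by (simp add: nn_integral_add nn_integral_cmult_indicator R_def add.assoc)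
  also have "\<dots> = ennreal (sum_list (map (\<lambda>(r, t). r * g t) (p # xs)))"
  proof -
    have "0 \<le> sum_list (map (\<lambda>(r, t). r * g t) xs)"
      using Cons.prems g by (intro sum_list_nonneg) auto
    then show ?thesis using r0 g[of t] by (simp add: p ennreal_mult ennreal_plus mult.commute)
  qed
  finally show ?case .
qed simp

lemma nn_integral_csi_marginal_snd:
  assumes [measurable]: "F \<in> borel_measurable borel"
  shows "(\<integral>\<^sup>+w. F (snd w) \<partial>csi_marginal) = (\<integral>\<^sup>+u. F u * indicator {0..1} u \<partial>lborel)"
proof -
  define D where "D = density lborel (exponential_density 1)"
  define U where "U = uniform_measure lborel {0..1::real}"
  interpret D: prob_space D unfolding D_def by (rule prob_space_exponential_density) simp
  interpret U: prob_space U unfolding U_def by (rule prob_space_uniform_measure) auto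
  interpret P: pair_sigma_finite D U ..
  have "(\<lambda>w. F (snd w)) \<in> borel_measurable (D \<Otimes>\<^sub>M U)"
    by (rule measurable_compose[OF measurable_snd]) (simp add: U_def)
  then have "(\<integral>\<^sup>+w. F (snd w) \<partial>csi_marginal) = (\<integral>\<^sup>+y. \<integral>\<^sup>+x. F (snd (x, y)) \<partial>D \<partial>U)"
    unfolding csi_marginal_def D_def[symmetric] U_def[symmetric] by (rule P.nn_integral_snd[symmetric])
  also have "\<dots> = (\<integral>\<^sup>+y. F y \<partial>U)" by (simp add: D.emeasure_space_1)
  also have "\<dots> = (\<integral>\<^sup>+u. F u * indicator {0..1} u \<partial>lborel)"
    unfolding U_def using mult_divide_eq_ennreal[of 1 "set_nn_integral lborel {0..1} F"]
    by (subst nn_integral_uniform_measure) auto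
  finally show ?thesis .
qed

lemma nn_integral_csi_marginal_fst:
  assumes [measurable]: "F \<in> borel_measurable borel"
  shows "(\<integral>\<^sup>+w. F (fst w) \<partial>csi_marginal) = (\<integral>\<^sup>+x. F x \<partial>density lborel (exponential_density 1))"
proof -
  define D where "D = density lborel (exponential_density 1)"
  define U where "U = uniform_measure lborel {0..1::real}"
  interpret D: prob_space D unfolding D_def by (rule prob_space_exponential_density) simp
  interpret U: prob_space U unfolding U_def by (rule prob_space_uniform_measure) auto
  interpret P: pair_sigma_finite D U ..
  have "(\<lambda>w. F (fst w)) \<in> borel_measurable (D \<Otimes>\<^sub>M U)"
    by (rule measurable_compose[OF measurable_fst]) (simp add: D_def)
  then have "(\<integral>\<^sup>+w. F (fst w) \<partial>csi_marginal) = (\<integral>\<^sup>+x. \<integral>\<^sup>+y. F (fst (x, y)) \<partial>U \<partial>D)"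
    unfolding csi_marginal_def D_def[symmetric] U_def[symmetric] by (rule U.nn_integral_fst[symmetric])
  also have "\<dots> = (\<integral>\<^sup>+x. F x \<partial>D)" by (simp add: U.emeasure_space_1)
  finally show ?thesis unfolding D_def .
qed

lemma csi_trans_rates_nonneg:
  assumes "0 \<le> lam" "csi_size s \<le> n" "(r, t) \<in> set (csi_trans n lam s)"
  shows "0 \<le> r"
proof -
  obtain B G where s: "s = (B, G)" by (cases s)
  have "real B + real G \<le> real n" using assms(2) s by (simp flip: of_nat_add)
  then show ?thesis using assms s by (auto simp: csi_trans_def)
qed

lemma csi_size_le_csi_qtot:
  assumes "0 \<le> lam" "csi_size s \<le> n"
  shows "real (csi_size s) \<le> csi_qtot n lam s"
proof -
  obtain B G where s: "s = (B, G)" by (cases s)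
  have "real B + real G \<le> real n" using assms(2) s by (simp flip: of_nat_add)
  then show ?thesis using assms s by (simp add: csi_qtot_def csi_trans_def)
qed

lemma nn_integral_csi_step:
  fixes g :: "cstate \<Rightarrow> real"
  assumes g: "\<And>t. 0 \<le> g t" and lam: "0 \<le> lam" and s: "csi_size s \<le> n"
    and q: "0 < csi_qtot n lam s"
  shows "(\<integral>\<^sup>+w. ennreal (g (csi_step n lam s (snd w))) \<partial>csi_marginal)
       = ennreal (sum_list (map (\<lambda>(r, t). r * g t) (csi_trans n lam s)) / csi_qtot n lam s)"
proof -
  define Q where "Q = csi_qtot n lam s"
  define L where "L = csi_trans n lam s"
  define S where "S = sum_list (map (\<lambda>(r, t). r * g t) L)"
  have QL: "Q = sum_list (map fst L)" unfolding Q_def L_def csi_qtot_def ..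
  have nnL: "\<forall>p\<in>set L. 0 \<le> fst p"
    unfolding L_def using csi_trans_rates_nonneg[OF lam s] by fastforce
  have Q0: "0 < Q" using q unfolding Q_def .
  have S0: "0 \<le> S" unfolding S_def using nnL g by (intro sum_list_nonneg) auto
  define f where "f v = indicator {0..<Q} v * ennreal (g (csi_select v L s))" for v :: real
  have [measurable]: "(\<lambda>v. ennreal (g (csi_select v L s))) \<in> borel_measurable borel"
    using measurable_csi_select by (rule measurable_compose) simp
  then have fm [measurable]: "f \<in> borel_measurable borel" unfolding f_def by measurable
  have "(\<integral>\<^sup>+w. ennreal (g (csi_step n lam s (snd w))) \<partial>csi_marginal)
      = (\<integral>\<^sup>+u. ennreal (g (csi_select (u * Q) L s)) * indicator {0..1} u \<partial>lborel)"
    using Q0 by (subst nn_integral_csi_marginal_snd) (simp_all add: csi_step_def Q_def L_def)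
  also have "\<dots> = (\<integral>\<^sup>+u. f (0 + Q * u) \<partial>lborel)"
  proof (intro nn_integral_cong_AE eventually_mono[OF AE_lborel_singleton[of 1]] impI)
    fix u :: real assume "u \<noteq> 1"
    then have "(0 \<le> u \<and> u \<le> 1) \<longleftrightarrow> (0 \<le> Q * u \<and> Q * u < Q)"
      using Q0 by (auto simp: zero_le_mult_iff)
    then show "ennreal (g (csi_select (u * Q) L s)) * indicator {0..1} u = f (0 + Q * u)"
      by (simp add: f_def indicator_def mult.commute)
  qed
  also have "\<dots> = (\<integral>\<^sup>+v. f v \<partial>lborel) / ennreal Q"
    using nn_integral_real_affine[OF fm, of Q 0] Q0
    by (simp add: ennreal_mult_divide_eq mult.commute[of "ennreal Q"])
  also have "(\<integral>\<^sup>+v. f v \<partial>lborel) = ennreal S"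
    using nn_integral_csi_select[OF nnL g, where c = 0] by (simp add: f_def S_def QL)
  finally show ?thesis using Q0 S0 by (simp add: divide_ennreal S_def L_def Q_def)
qed

lemma csi_select_cases:
  assumes "0 \<le> u"
  shows "csi_select u xs s = s \<or> (\<exists>(r, t)\<in>set xs. 0 < r \<and> csi_select u xs s = t)"
  using assms by (induction u xs s rule: csi_select.induct) force+

lemma csi_size_trans_target_le:
  assumes "(r, t) \<in> set (csi_trans n lam s)" "0 < r" "csi_size s \<le> n"
  shows "csi_size t \<le> n"
proof -
  obtain B G where s: "s = (B, G)" by (cases s)
  have "G \<noteq> 0" if "t = (B + 1, G - 1)" "r = lam / real n * real B * real G"
    using that \<open>0 < r\<close> by (cases "G = 0") auto
  moreover have "B + G \<noteq> n" if "t = (B, G + 1)" "r = lam / real n * real B * (real n - real B - real G)"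
    using that \<open>0 < r\<close> by auto
  ultimately show ?thesis using assms s by (auto simp: csi_trans_def)
qed

text \<open>For \<open>u < 0\<close> the first transition is selected even if its rate vanishes; otherwise only
  transitions of positive rate can be selected.\<close>
lemma csi_size_csi_step_le:
  assumes "csi_size s \<le> n"
  shows "csi_size (csi_step n lam s u) \<le> n"
proof -
  obtain B G where s: "s = (B, G)" by (cases s)
  define v where "v = u * csi_qtot n lam s"
  consider "csi_qtot n lam s = 0" | "v < 0" | "csi_qtot n lam s \<noteq> 0" "0 \<le> v" by linarith
  then show ?thesis
  proof cases
    case 2
    then have "v < real B" by simp
    then show ?thesis using assms s by (auto simp: csi_step_def v_def csi_trans_def)
  next
    case 3
    then show ?thesis
      using csi_select_cases[OF \<open>0 \<le> v\<close>, of "csi_trans n lam s" s] assms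
      by (auto simp: csi_step_def v_def dest: csi_size_trans_target_le)
  qed (use assms in \<open>simp add: csi_step_def\<close>)
qed

lemma csi_step_zero: "csi_step n lam (0, 0) u = (0, 0)"
  by (simp add: csi_step_def csi_qtot_def csi_trans_def)

lemma measurable_csi_step [measurable]:
  "(\<lambda>w. g (csi_step n lam s (snd w))) \<in> measurable csi_marginal (count_space UNIV)"
proof -
  have "(\<lambda>u. csi_select (u * csi_qtot n lam s) (csi_trans n lam s) s) \<in> measurable borel (count_space UNIV)"
    by (rule measurable_compose[OF _ measurable_csi_select]) simp
  then have "csi_step n lam s \<in> measurable borel (count_space UNIV)"
    unfolding csi_step_def[abs_def] by (cases "csi_qtot n lam s = 0") simp_all
  then have "(\<lambda>w. csi_step n lam s (snd w)) \<in> measurable csi_marginal (count_space UNIV)"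
    by (rule measurable_compose[OF measurable_snd_csi_marginal])
  then show ?thesis by (rule measurable_compose) simp
qed

lemma csi_jump_eq_noise_chain:
  "csi_jump n lam s0 \<omega> k = noise_chain (\<lambda>s w. csi_step n lam s (snd w)) s0 \<omega> k"
  by (induction k) (simp_all add: noise_chain_Suc)

lemma measurable_csi_jump [measurable]:
  "(\<lambda>\<omega>. csi_jump n lam s0 \<omega> k) \<in> measurable csi_space (count_space UNIV)"
  unfolding csi_jump_eq_noise_chain by (rule measurable_noise_chain) (rule measurable_csi_step)

lemma csi_size_csi_jump_le: "csi_size s0 \<le> n \<Longrightarrow> csi_size (csi_jump n lam s0 \<omega> k) \<le> n"
  by (induction k) (simp_all add: csi_size_csi_step_le)

definition csi_lyap :: "nat \<Rightarrow> real \<Rightarrow> cstate \<Rightarrow> real" where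
  "csi_lyap n lam s = (2 + lam / 2) * real (fst s) + real (snd s) - lam / (2 * real n) * real (fst s) ^ 2"

text \<open>The four transitions of \<open>csi_trans\<close>, as pairs (rate, increment of \<open>csi_lyap\<close>); for a
  transition of rate zero the recorded increment may be fictitious.\<close>
definition csi_lyap_jumps :: "nat \<Rightarrow> real \<Rightarrow> cstate \<Rightarrow> (real \<times> real) list" where
  "csi_lyap_jumps n lam s = (case s of (B, G) \<Rightarrow>
     let x = real B; y = real G; c = lam / (2 * real n) in
     [(x, c * (2 * x - 1) - (2 + lam / 2)),
      (y, -1),
      (lam / real n * x * y, 1 + lam / 2 - c * (2 * x + 1)),
      (lam / real n * x * (real n - x - y), 1)])"

text \<open>A lower bound on the mean decrease of \<open>csi_lyap\<close> per unit of \<open>B\<close> and of \<open>G\<close> in the total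
  jump intensity; it is positive exactly when \<open>lam < 4\<close>.\<close>
definition lyap_drift :: "real \<Rightarrow> real" where
  "lyap_drift lam = min (2 - lam / 2) (1 - lam\<^sup>2 / 16)"

definition lyap_decay :: "real \<Rightarrow> real" where
  "lyap_decay lam = lyap_drift lam / (2 * (1 + lam))"

definition lyap_jump_bound :: "real \<Rightarrow> real" where
  "lyap_jump_bound lam = 3 + 2 * lam"

definition lyap_exponent :: "real \<Rightarrow> real" where
  "lyap_exponent lam = min (1 / lyap_jump_bound lam) (lyap_decay lam / lyap_jump_bound lam ^ 2)"

lemma lyap_constants_pos:
  assumes "0 < lam" "lam < 4"
  shows "0 < lyap_drift lam" "0 < lyap_decay lam" "lyap_decay lam \<le> 1"
    "1 \<le> lyap_jump_bound lam" "0 < lyap_exponent lam"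
proof -
  have "lam\<^sup>2 < 4\<^sup>2" using assms by (intro power_strict_mono) auto
  then show drift: "0 < lyap_drift lam" using assms by (simp add: lyap_drift_def)
  then show decay: "0 < lyap_decay lam" using assms by (simp add: lyap_decay_def)
  have "lyap_drift lam \<le> 2 * (1 + lam)" using assms by (simp add: lyap_drift_def)
  then show "lyap_decay lam \<le> 1" using assms by (simp add: lyap_decay_def)
  show "1 \<le> lyap_jump_bound lam" using assms by (simp add: lyap_jump_bound_def)
  then show "0 < lyap_exponent lam" using decay by (simp add: lyap_exponent_def)
qed

lemma exp_le_one_plus_square:
  fixes z :: real
  assumes "\<bar>z\<bar> \<le> 1"
  shows "exp z \<le> 1 + z + z\<^sup>2"
proof (cases "0 \<le> z")
  case True
  then show ?thesis using exp_bound[of z] assms by auto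
next
  case False
  define w where "w = - z"
  have w: "0 \<le> w" using False by (simp add: w_def)
  have pos: "0 < 1 + w + w\<^sup>2 / 2" using w by (simp add: add_pos_nonneg)
  have "1 \<le> (1 + w + w\<^sup>2 / 2) * (1 - w + w\<^sup>2)"
  proof -
    have "(1 + w + w\<^sup>2 / 2) * (1 - w + w\<^sup>2) = 1 + (w\<^sup>2 / 2 + w ^ 3 / 2 + w ^ 4 / 2)"
      by (simp add: field_simps power2_eq_square power3_eq_cube power4_eq_xxxx)
    then show ?thesis using w by simp
  qed
  then have "1 / (1 + w + w\<^sup>2 / 2) \<le> 1 - w + w\<^sup>2"
    using pos by (simp add: divide_le_eq mult.commute)
  moreover have "exp z \<le> 1 / (1 + w + w\<^sup>2 / 2)"
  proof -
    have "exp z * (1 + w + w\<^sup>2 / 2) \<le> exp z * exp w"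
      by (intro mult_left_mono exp_lower_Taylor_quadratic[OF w]) auto
    also have "\<dots> = 1" by (simp add: w_def flip: exp_add)
    finally show ?thesis using pos by (simp add: le_divide_eq)
  qed
  ultimately show ?thesis by (simp add: w_def)
qed

lemma sum_list_exp_le_of_drift:
  fixes xs :: "(real \<times> real) list"
  assumes bounded: "\<forall>(r, D)\<in>set xs. 0 \<le> r \<and> \<bar>D\<bar> \<le> L"
    and drift: "sum_list (map (\<lambda>(r, D). r * D) xs) \<le> - 2 * d * sum_list (map fst xs)"
    and b: "0 \<le> b" "b * L \<le> 1" "b * L\<^sup>2 \<le> d"
  shows "sum_list (map (\<lambda>(r, D). r * exp (b * D)) xs) \<le> sum_list (map fst xs) * exp (- b * d)"
proof -
  define R where "R = sum_list (map fst xs)"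
  have R: "0 \<le> R" unfolding R_def using bounded by (intro sum_list_nonneg) auto
  have "r * exp (b * D) \<le> r * (1 + b * D + b\<^sup>2 * L\<^sup>2)" if "0 \<le> r" "\<bar>D\<bar> \<le> L" for r D
  proof -
    have bD: "\<bar>b * D\<bar> \<le> \<bar>b * L\<bar>" using that b by (simp add: abs_mult mult_left_mono)
    then have "(b * D)\<^sup>2 \<le> (b * L)\<^sup>2" by (simp only: abs_le_square_iff)
    moreover have "\<bar>b * D\<bar> \<le> 1" using bD b that by (simp add: abs_mult)
    ultimately have "exp (b * D) \<le> 1 + b * D + b\<^sup>2 * L\<^sup>2"
      using exp_le_one_plus_square[of "b * D"] by (simp add: power_mult_distrib)
    then show ?thesis using that(1) by (rule mult_left_mono)
  qed
  then have "sum_list (map (\<lambda>(r, D). r * exp (b * D)) xs)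
      \<le> sum_list (map (\<lambda>(r, D). r * (1 + b * D + b\<^sup>2 * L\<^sup>2)) xs)"
    using bounded by (intro sum_list_mono) auto
  also have "\<dots> = R + b * sum_list (map (\<lambda>(r, D). r * D) xs) + b\<^sup>2 * L\<^sup>2 * R"
    unfolding R_def by (induction xs) (auto simp: algebra_simps)
  also have "\<dots> \<le> R + b * (- 2 * d * R) + b * d * R"
  proof -
    have "b * sum_list (map (\<lambda>(r, D). r * D) xs) \<le> b * (- 2 * d * R)"
      using drift b by (intro mult_left_mono) (auto simp: R_def)
    moreover have "b\<^sup>2 * L\<^sup>2 \<le> b * d"
      using b mult_left_mono[OF b(3) b(1)] by (simp add: power2_eq_square mult.assoc)
    ultimately show ?thesis using R by (smt (verit) mult_right_mono)
  qed
  also have "\<dots> = R * (1 + (- b * d))" by (simp add: algebra_simps)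
  also have "\<dots> \<le> R * exp (- b * d)" using R by (intro mult_left_mono exp_ge_add_one_self) auto
  finally show ?thesis by (simp add: R_def)
qed

lemma sum_list_csi_trans_eq_jumps:
  "sum_list (map (\<lambda>(r, t). r * f (csi_lyap n lam t)) (csi_trans n lam s))
     = sum_list (map (\<lambda>(r, D). r * f (csi_lyap n lam s + D)) (csi_lyap_jumps n lam s))"
proof -
  obtain B G where s: "s = (B, G)" by (cases s)
  define c where "c = lam / (2 * real n)"
  define r3 where "r3 = lam / real n * real B * real G"
  define r4 where "r4 = lam / real n * real B * (real n - real B - real G)"
  note lyap = csi_lyap_def[of n lam, folded c_def]
  have "csi_lyap n lam (B - 1, G) = csi_lyap n lam s + (c * (2 * real B - 1) - (2 + lam / 2))"
    if "0 < B"
    using that unfolding s lyap by (simp add: of_nat_diff power2_eq_square field_simps)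
  then have e1: "real B * f (csi_lyap n lam (B - 1, G))
      = real B * f (csi_lyap n lam s + (c * (2 * real B - 1) - (2 + lam / 2)))"
    by (cases "B = 0") auto
  have "csi_lyap n lam (B, G - 1) = csi_lyap n lam s + -1" if "0 < G"
    using that unfolding s lyap by (simp add: of_nat_diff)
  then have e2: "real G * f (csi_lyap n lam (B, G - 1)) = real G * f (csi_lyap n lam s + -1)"
    by (cases "G = 0") auto
  have "csi_lyap n lam (B + 1, G - 1) = csi_lyap n lam s + (1 + lam / 2 - c * (2 * real B + 1))"
    if "0 < G"
    using that unfolding s lyap by (simp add: of_nat_diff power2_eq_square field_simps)
  then have e3: "r3 * f (csi_lyap n lam (B + 1, G - 1))
      = r3 * f (csi_lyap n lam s + (1 + lam / 2 - c * (2 * real B + 1)))"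
    by (cases "G = 0") (auto simp: r3_def)
  have e4: "r4 * f (csi_lyap n lam (B, G + 1)) = r4 * f (csi_lyap n lam s + 1)"
    unfolding s lyap by (simp add: algebra_simps)
  have "sum_list (map (\<lambda>(r, t). r * f (csi_lyap n lam t)) (csi_trans n lam s))
      = real B * f (csi_lyap n lam (B - 1, G)) + real G * f (csi_lyap n lam (B, G - 1))
        + r3 * f (csi_lyap n lam (B + 1, G - 1)) + r4 * f (csi_lyap n lam (B, G + 1))"
    by (simp add: s csi_trans_def r3_def r4_def add.assoc)
  also have "\<dots> = sum_list (map (\<lambda>(r, D). r * f (csi_lyap n lam s + D)) (csi_lyap_jumps n lam s))"
    unfolding e1 e2 e3 e4 by (simp add: s csi_lyap_jumps_def Let_def r3_def r4_def c_def add.assoc)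
  finally show ?thesis .
qed

lemma csi_lyap_jumps_rates: "map fst (csi_lyap_jumps n lam s) = map fst (csi_trans n lam s)"
  by (cases s) (simp add: csi_trans_def csi_lyap_jumps_def Let_def)

lemma csi_lyap_jumps_bounded:
  assumes "0 < lam" "0 < n" "csi_size s \<le> n"
  shows "\<forall>(r, D)\<in>set (csi_lyap_jumps n lam s). 0 \<le> r \<and> \<bar>D\<bar> \<le> lyap_jump_bound lam"
proof -
  obtain B G where s: "s = (B, G)" by (cases s)
  define x where "x = real B"
  define y where "y = real G"
  define c where "c = lam / (2 * real n)"
  have xyN: "x + y \<le> real n"
    using assms(3) by (simp add: s x_def y_def flip: of_nat_add)
  have x: "0 \<le> x" and y: "0 \<le> y" by (simp_all add: x_def y_def)
  have c: "0 \<le> c" "c \<le> lam / 2" "c * (2 * x) \<le> lam"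
    using assms xyN y by (auto simp: c_def field_simps)
  have "0 \<le> c * (2 * x)" using c x by simp
  then have "\<bar>c * (2 * x - 1) - (2 + lam / 2)\<bar> \<le> lyap_jump_bound lam"
    "\<bar>1 + lam / 2 - c * (2 * x + 1)\<bar> \<le> lyap_jump_bound lam"
    using assms c by (simp_all add: lyap_jump_bound_def abs_le_iff algebra_simps)
  moreover have "0 \<le> lam / real n * x * y" "0 \<le> lam / real n * x * (real n - x - y)"
    using assms x y xyN by simp_all
  ultimately show ?thesis using x y assms
    unfolding s csi_lyap_jumps_def Let_def prod.case x_def[symmetric] y_def[symmetric] c_def[symmetric]
    by (simp add: lyap_jump_bound_def)
qed

lemma sum_list_csi_lyap_jumps_increment_le:
  assumes "0 < lam" "lam < 4" "0 < n" "csi_size s \<le> n"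
  shows "sum_list (map (\<lambda>(r, D). r * D) (csi_lyap_jumps n lam s)) \<le> - lyap_drift lam * real (csi_size s)"
proof -
  obtain B G where s: "s = (B, G)" by (cases s)
  define x where "x = real B"
  define y where "y = real G"
  define N where "N = real n"
  have x: "0 \<le> x" and y: "0 \<le> y" and N: "1 \<le> N"
    using assms by (simp_all add: x_def y_def N_def)
  have drift_eq: "sum_list (map (\<lambda>(r, D). r * D) (csi_lyap_jumps n lam s))
      = - (2 - lam / 2) * x - lam / (2 * N) * x - y + lam\<^sup>2 * y * (x * (N - 2 * x - 1)) / (2 * N\<^sup>2)"
    using N by (simp add: s csi_lyap_jumps_def Let_def x_def y_def N_def field_simps power2_eq_square)
  have "8 * (x * (N - 2 * x - 1)) = N\<^sup>2 - (N - 4 * x)\<^sup>2 - 8 * x"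
    by (simp add: power2_eq_square algebra_simps)
  then have "8 * (x * (N - 2 * x - 1)) \<le> N\<^sup>2"
    using x by (smt (verit) zero_le_power2)
  then have "lam\<^sup>2 * y * (x * (N - 2 * x - 1)) / (2 * N\<^sup>2) \<le> lam\<^sup>2 * y * (N\<^sup>2 / 8) / (2 * N\<^sup>2)"
    using y N by (intro divide_right_mono mult_left_mono) auto
  also have "\<dots> = lam\<^sup>2 / 16 * y" using N by (simp add: field_simps)
  finally have "sum_list (map (\<lambda>(r, D). r * D) (csi_lyap_jumps n lam s))
      \<le> - (2 - lam / 2) * x - y + lam\<^sup>2 / 16 * y"
    using drift_eq assms x N by (smt (verit) divide_nonneg_nonneg mult_nonneg_nonneg)
  moreover have "lyap_drift lam * x \<le> (2 - lam / 2) * x" "lyap_drift lam * y \<le> (1 - lam\<^sup>2 / 16) * y"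
    using x y by (simp_all add: lyap_drift_def mult_right_mono)
  ultimately show ?thesis by (simp add: s x_def y_def algebra_simps)
qed

lemma sum_list_csi_lyap_jumps_rate_le:
  assumes "0 < lam" "0 < n" "csi_size s \<le> n"
  shows "sum_list (map fst (csi_lyap_jumps n lam s)) \<le> (1 + lam) * real (csi_size s)"
proof -
  obtain B G where s: "s = (B, G)" by (cases s)
  have "lam / real n * real B * (real n - real B) \<le> lam * real B"
    using assms s by (simp add: field_simps mult_left_mono)
  moreover have "sum_list (map fst (csi_lyap_jumps n lam s))
      = real B + real G + lam / real n * real B * (real n - real B)"
    using assms by (simp add: s csi_lyap_jumps_def Let_def field_simps)
  moreover have "0 \<le> lam * real G" using assms by simp
  ultimately show ?thesis by (simp add: s algebra_simps)
qed

lemma csi_lyap_jumps_drift: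
  assumes "0 < lam" "lam < 4" "0 < n" "csi_size s \<le> n"
  shows "sum_list (map (\<lambda>(r, D). r * D) (csi_lyap_jumps n lam s))
      \<le> - 2 * lyap_decay lam * sum_list (map fst (csi_lyap_jumps n lam s))"
proof -
  have "2 * lyap_decay lam * sum_list (map fst (csi_lyap_jumps n lam s))
      = lyap_drift lam * (sum_list (map fst (csi_lyap_jumps n lam s)) / (1 + lam))"
    using assms(1) by (simp add: lyap_decay_def field_simps)
  also have "\<dots> \<le> lyap_drift lam * real (csi_size s)"
    using sum_list_csi_lyap_jumps_rate_le[OF assms(1,3,4)] lyap_constants_pos(1)[OF assms(1,2)] assms(1)
    by (intro mult_left_mono) (auto simp: divide_le_eq mult.commute)
  finally show ?thesis using sum_list_csi_lyap_jumps_increment_le[OF assms] by simp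
qed

lemma nn_integral_exp_csi_lyap_step_le:
  assumes lam: "0 < lam" "lam < 4" and n: "0 < n" and s: "csi_size s \<le> n" "s \<noteq> (0, 0)"
    and b: "0 < b" "b \<le> lyap_exponent lam"
  shows "(\<integral>\<^sup>+w. ennreal (exp (b * csi_lyap n lam (csi_step n lam s (snd w)) + K)) \<partial>csi_marginal)
      \<le> ennreal (exp (b * csi_lyap n lam s + K - b * lyap_decay lam))"
proof -
  define q where "q = csi_qtot n lam s"
  define J where "J = csi_lyap_jumps n lam s"
  have Jq: "sum_list (map fst J) = q"
    by (simp add: J_def q_def csi_qtot_def csi_lyap_jumps_rates)
  have q: "0 < q"
    using csi_size_le_csi_qtot[of lam s n] lam s by (cases s) (auto simp: q_def)
  have L: "b * lyap_jump_bound lam \<le> 1" "b * (lyap_jump_bound lam)\<^sup>2 \<le> lyap_decay lam"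
    using b lyap_constants_pos(4)[OF lam]
    by (auto simp: lyap_exponent_def le_divide_eq mult.commute)
  have "sum_list (map (\<lambda>(r, t). r * exp (b * csi_lyap n lam t + K)) (csi_trans n lam s))
      = exp (b * csi_lyap n lam s + K) * sum_list (map (\<lambda>(r, D). r * exp (b * D)) J)"
  proof -
    have "(\<lambda>(r, D). r * exp (b * (csi_lyap n lam s + D) + K))
        = (\<lambda>p. exp (b * csi_lyap n lam s + K) * (case p of (r, D) \<Rightarrow> r * exp (b * D)))"
      by (auto simp: fun_eq_iff algebra_simps simp flip: exp_add)
    then show ?thesis
      unfolding sum_list_csi_trans_eq_jumps[where f = "\<lambda>v. exp (b * v + K)"] J_def
      by (simp add: sum_list_const_mult)
  qed
  also have "\<dots> \<le> exp (b * csi_lyap n lam s + K) * (q * exp (- b * lyap_decay lam))"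
    using sum_list_exp_le_of_drift[OF csi_lyap_jumps_bounded[OF lam(1) n s(1)]
        csi_lyap_jumps_drift[OF lam n s(1)] _ L] b
    by (intro mult_left_mono) (auto simp: J_def Jq[unfolded J_def])
  finally have "sum_list (map (\<lambda>(r, t). r * exp (b * csi_lyap n lam t + K)) (csi_trans n lam s)) / q
      \<le> exp (b * csi_lyap n lam s + K - b * lyap_decay lam)"
    using q by (simp add: divide_le_eq exp_diff exp_minus field_simps)
  then show ?thesis
    using q lam s by (subst nn_integral_csi_step) (auto simp: q_def intro: ennreal_leI)
qed

lemma csi_lyap_bounds:
  assumes "0 < lam" "lam < 4" "0 < n" "csi_size s \<le> n"
  shows "real (csi_size s) \<le> csi_lyap n lam s" "csi_lyap n lam s \<le> 4 * real (csi_size s)"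
proof -
  define x where "x = real (fst s)"
  have x: "0 \<le> x" "x \<le> real n" using assms(4) by (auto simp: x_def)
  have "lam / (2 * real n) * x\<^sup>2 = lam / 2 * x * (x / real n)"
    using assms(3) by (simp add: power2_eq_square field_simps)
  moreover have "lam / 2 * x * (x / real n) \<le> lam / 2 * x"
    using assms x by (intro mult_left_le) (auto simp: divide_le_eq)
  moreover have "0 \<le> lam / (2 * real n) * x\<^sup>2" "lam / 2 * x \<le> 2 * x"
    using assms x mult_right_mono[of lam 4 x] by simp_all
  moreover have "csi_lyap n lam s = 2 * x + lam / 2 * x + real (snd s) - lam / (2 * real n) * x\<^sup>2"
    by (simp add: csi_lyap_def x_def algebra_simps)
  moreover have "real (csi_size s) = x + real (snd s)" by (simp add: x_def)
  ultimately show "real (csi_size s) \<le> csi_lyap n lam s" "csi_lyap n lam s \<le> 4 * real (csi_size s)"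
    using x of_nat_0_le_iff[of "snd s"] by (linarith, smt (verit))
qed

lemma csi_lyap_initial: "0 < n \<Longrightarrow> csi_lyap n lam (n, 0) = 2 * real n"
  by (simp add: csi_lyap_def power2_eq_square field_simps)

lemma csi_size_csi_jump_le_lyap:
  assumes "0 < lam" "lam < 4" "0 < n" "csi_size s0 \<le> n"
  shows "real (csi_size (csi_jump n lam s0 \<omega> k)) \<le> csi_lyap n lam (csi_jump n lam s0 \<omega> k)"
  using assms by (intro csi_lyap_bounds(1) csi_size_csi_jump_le)

definition csi_counted_step :: "nat \<Rightarrow> real \<Rightarrow> cstate \<times> nat \<Rightarrow> real \<times> real \<Rightarrow> cstate \<times> nat" where
  "csi_counted_step n lam y w = (csi_step n lam (fst y) (snd w), Suc (snd y))"

lemma measurable_csi_counted_step [measurable]: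
  "csi_counted_step n lam y \<in> measurable csi_marginal (count_space UNIV)"
  using measurable_csi_step[where g = "\<lambda>s. (s, Suc (snd y))"]
  by (simp add: csi_counted_step_def[abs_def])

lemma noise_chain_csi_counted_step:
  "noise_chain (csi_counted_step n lam) (s0, 0) \<omega> k = (csi_jump n lam s0 \<omega> k, k)"
  by (induction k) (auto simp: noise_chain_Suc csi_counted_step_def)

text \<open>The factor \<open>exp (b lyap_decay k)\<close> offsets the mean decrease of \<open>exp (b csi_lyap)\<close> per jump, so this
  is still a supermartingale, yet it is large whenever the chain is large after many jumps.\<close>
definition csi_counted_lyap :: "nat \<Rightarrow> real \<Rightarrow> real \<Rightarrow> cstate \<times> nat \<Rightarrow> real" where
  "csi_counted_lyap n lam b y = (if fst y = (0, 0) then 0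
     else exp (b * csi_lyap n lam (fst y) + b * lyap_decay lam * real (snd y)))"

lemma nn_integral_csi_counted_lyap_le:
  assumes lam: "0 < lam" "lam < 4" and n: "0 < n" and b: "0 < b" "b \<le> lyap_exponent lam"
    and y: "csi_size (fst y) \<le> n"
  shows "(\<integral>\<^sup>+w. csi_counted_lyap n lam b (csi_counted_step n lam y w) \<partial>csi_marginal)
      \<le> csi_counted_lyap n lam b y"
proof -
  obtain s k where yy: "y = (s, k)" by (cases y)
  show ?thesis
  proof (cases "s = (0, 0)")
    case False
    have "(\<integral>\<^sup>+w. csi_counted_lyap n lam b (csi_counted_step n lam y w) \<partial>csi_marginal)
        \<le> (\<integral>\<^sup>+w. exp (b * csi_lyap n lam (csi_step n lam s (snd w))
              + b * lyap_decay lam * real (Suc k)) \<partial>csi_marginal)"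
      by (intro nn_integral_mono) (simp add: yy csi_counted_step_def csi_counted_lyap_def)
    also have "\<dots> \<le> exp (b * csi_lyap n lam s + b * lyap_decay lam * real (Suc k) - b * lyap_decay lam)"
      using y False by (intro nn_integral_exp_csi_lyap_step_le[OF lam n _ _ b]) (auto simp: yy)
    also have "\<dots> = csi_counted_lyap n lam b y"
      using False by (simp add: yy csi_counted_lyap_def algebra_simps)
    finally show ?thesis .
  qed (simp add: yy csi_counted_step_def csi_counted_lyap_def csi_step_zero)
qed

lemma measure_csi_jump_late_large_le:
  assumes lam: "0 < lam" "lam < 4" and n: "0 < n" and s0: "csi_size s0 \<le> n"
    and b: "0 < b" "b \<le> lyap_exponent lam" and A: "0 < A"
  shows "measure csi_space {\<omega>\<in>space csi_space. \<exists>k\<ge>m. A \<le> real (csi_size (csi_jump n lam s0 \<omega> k))}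
      \<le> exp (b * (csi_lyap n lam s0 - A - lyap_decay lam * real m))"
proof -
  define a where "a = exp (b * A + b * lyap_decay lam * real m)"
  have "measure csi_space {\<omega>\<in>space csi_space. \<exists>k\<ge>m. A \<le> real (csi_size (csi_jump n lam s0 \<omega> k))}
      \<le> csi_counted_lyap n lam b (s0, 0) / a"
  proof (rule measure_noise_chain_hits_le[where S = "{y. csi_size (fst y) \<le> n}"])
    show "{\<omega>\<in>space csi_space. \<exists>k\<ge>m. A \<le> real (csi_size (csi_jump n lam s0 \<omega> k))}
        \<subseteq> {\<omega>\<in>space csi_space. \<exists>k. a \<le> csi_counted_lyap n lam b (noise_chain (csi_counted_step n lam) (s0, 0) \<omega> k)}"
    proof safe
      fix \<omega> k assume k: "m \<le> k" and large: "A \<le> real (csi_size (csi_jump n lam s0 \<omega> k))"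
      have "b * A \<le> b * csi_lyap n lam (csi_jump n lam s0 \<omega> k)"
        using order_trans[OF large csi_size_csi_jump_le_lyap[OF lam n s0]] b by simp
      moreover have "b * lyap_decay lam * real m \<le> b * lyap_decay lam * real k"
        using k b lyap_constants_pos(2)[OF lam] by simp
      moreover have "csi_jump n lam s0 \<omega> k \<noteq> (0, 0)" using large A by auto
      ultimately have "a \<le> csi_counted_lyap n lam b (noise_chain (csi_counted_step n lam) (s0, 0) \<omega> k)"
        by (simp add: a_def csi_counted_lyap_def noise_chain_csi_counted_step)
      then show "\<exists>k. a \<le> csi_counted_lyap n lam b (noise_chain (csi_counted_step n lam) (s0, 0) \<omega> k)" ..
    qed
  next
    show "(\<integral>\<^sup>+w. csi_counted_lyap n lam b (csi_counted_step n lam y w) \<partial>csi_marginal)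
        \<le> csi_counted_lyap n lam b y" if "y \<in> {y. csi_size (fst y) \<le> n}" for y
      using that by (intro nn_integral_csi_counted_lyap_le[OF lam n b]) simp
  qed (auto simp: a_def s0 csi_counted_step_def csi_counted_lyap_def csi_size_csi_step_le)
  also have "csi_counted_lyap n lam b (s0, 0) / a \<le> exp (b * (csi_lyap n lam s0 - A - lyap_decay lam * real m))"
    by (simp add: csi_counted_lyap_def a_def algebra_simps exp_diff[symmetric] exp_add[symmetric])
  finally show ?thesis .
qed

definition csi_flagged_step :: "nat \<Rightarrow> real \<Rightarrow> real \<Rightarrow> cstate \<times> bool \<Rightarrow> real \<times> real \<Rightarrow> cstate \<times> bool" where
  "csi_flagged_step n lam e y w =
     (let s = csi_step n lam (fst y) (snd w) in (s, snd y \<or> real (csi_size s) < e))"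

lemma measurable_csi_flagged_step [measurable]:
  "csi_flagged_step n lam e y \<in> measurable csi_marginal (count_space UNIV)"
  using measurable_csi_step[where g = "\<lambda>s. (s, snd y \<or> real (csi_size s) < e)"]
  by (simp add: csi_flagged_step_def[abs_def] Let_def)

lemma noise_chain_csi_flagged_step:
  "noise_chain (csi_flagged_step n lam e) (s0, real (csi_size s0) < e) \<omega> k
     = (csi_jump n lam s0 \<omega> k, \<exists>i\<le>k. real (csi_size (csi_jump n lam s0 \<omega> i)) < e)"
  by (induction k) (auto simp: noise_chain_Suc csi_flagged_step_def Let_def le_Suc_eq)

text \<open>Equal to \<open>1\<close> until the chain first drops below \<open>e\<close>; at that moment \<open>csi_lyap < 4 e\<close>, so
  switching to the exponential does not increase it.\<close>
definition csi_flagged_lyap :: "nat \<Rightarrow> real \<Rightarrow> real \<Rightarrow> real \<Rightarrow> cstate \<times> bool \<Rightarrow> real" where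
  "csi_flagged_lyap n lam b e y = (if snd y then exp (b * (csi_lyap n lam (fst y) - 4 * e)) else 1)"

lemma csi_flagged_lyap_le_1:
  assumes lam: "0 < lam" "lam < 4" and n: "0 < n" and b: "0 \<le> b"
    and s: "csi_size s \<le> n" "flag \<longrightarrow> real (csi_size s) < e"
  shows "csi_flagged_lyap n lam b e (s, flag) \<le> 1"
proof -
  have "flag \<longrightarrow> csi_lyap n lam s - 4 * e \<le> 0"
    using csi_lyap_bounds(2)[OF lam n s(1)] s(2) by auto
  then show ?thesis using b by (auto simp: csi_flagged_lyap_def mult_nonneg_nonpos)
qed

lemma nn_integral_csi_flagged_lyap_le:
  assumes lam: "0 < lam" "lam < 4" and n: "0 < n" and b: "0 < b" "b \<le> lyap_exponent lam"
    and y: "csi_size (fst y) \<le> n"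
  shows "(\<integral>\<^sup>+w. csi_flagged_lyap n lam b e (csi_flagged_step n lam e y w) \<partial>csi_marginal)
      \<le> csi_flagged_lyap n lam b e y"
proof -
  interpret M: prob_space csi_marginal by (rule prob_space_csi_marginal)
  obtain s flag where yy: "y = (s, flag)" by (cases y)
  consider "flag" "s \<noteq> (0, 0)" | "\<not> flag" | "flag" "s = (0, 0)" by blast
  then show ?thesis
  proof cases
    case 1
    have "(\<integral>\<^sup>+w. csi_flagged_lyap n lam b e (csi_flagged_step n lam e y w) \<partial>csi_marginal)
        = (\<integral>\<^sup>+w. exp (b * csi_lyap n lam (csi_step n lam s (snd w)) + - (b * 4 * e)) \<partial>csi_marginal)"
      using 1 by (intro nn_integral_cong) (simp add: yy csi_flagged_step_def Let_def csi_flagged_lyap_def algebra_simps)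
    also have "\<dots> \<le> exp (b * csi_lyap n lam s + - (b * 4 * e) - b * lyap_decay lam)"
      using y 1 by (intro nn_integral_exp_csi_lyap_step_le[OF lam n _ _ b]) (auto simp: yy)
    also have "\<dots> \<le> csi_flagged_lyap n lam b e y"
      using 1 b lyap_constants_pos(2)[OF lam]
      by (intro ennreal_leI) (simp add: yy csi_flagged_lyap_def algebra_simps)
    finally show ?thesis .
  next
    case 2
    have "csi_flagged_lyap n lam b e (csi_flagged_step n lam e y w) \<le> 1" for w
      using 2 y b unfolding yy csi_flagged_step_def Let_def
      by (intro csi_flagged_lyap_le_1[OF lam n] csi_size_csi_step_le) auto
    then have "(\<integral>\<^sup>+w. csi_flagged_lyap n lam b e (csi_flagged_step n lam e y w) \<partial>csi_marginal)
        \<le> (\<integral>\<^sup>+w. 1 \<partial>csi_marginal)"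
      by (intro nn_integral_mono) (simp add: ennreal_le_1)
    then show ?thesis using 2 by (simp add: yy csi_flagged_lyap_def M.emeasure_space_1)
  qed (simp add: yy csi_flagged_step_def Let_def csi_flagged_lyap_def csi_step_zero M.emeasure_space_1)
qed

lemma measure_csi_jump_revival_le:
  assumes lam: "0 < lam" "lam < 4" and n: "0 < n" and s0: "csi_size s0 \<le> n"
    and b: "0 < b" "b \<le> lyap_exponent lam"
  shows "measure csi_space {\<omega>\<in>space csi_space. \<exists>j. (\<exists>i\<le>j. real (csi_size (csi_jump n lam s0 \<omega> i)) < e)
        \<and> A \<le> real (csi_size (csi_jump n lam s0 \<omega> j))}
      \<le> exp (- (b * (A - 4 * e)))"
proof -
  define a where "a = exp (b * (A - 4 * e))"
  have "measure csi_space {\<omega>\<in>space csi_space. \<exists>j. (\<exists>i\<le>j. real (csi_size (csi_jump n lam s0 \<omega> i)) < e)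
        \<and> A \<le> real (csi_size (csi_jump n lam s0 \<omega> j))}
      \<le> csi_flagged_lyap n lam b e (s0, real (csi_size s0) < e) / a"
  proof (rule measure_noise_chain_hits_le[where S = "{y. csi_size (fst y) \<le> n}"])
    show "{\<omega>\<in>space csi_space. \<exists>j. (\<exists>i\<le>j. real (csi_size (csi_jump n lam s0 \<omega> i)) < e)
          \<and> A \<le> real (csi_size (csi_jump n lam s0 \<omega> j))}
        \<subseteq> {\<omega>\<in>space csi_space. \<exists>k. a \<le> csi_flagged_lyap n lam b e
            (noise_chain (csi_flagged_step n lam e) (s0, real (csi_size s0) < e) \<omega> k)}"
    proof safe
      fix \<omega> i j assume "i \<le> j" "real (csi_size (csi_jump n lam s0 \<omega> i)) < e"
        and large: "A \<le> real (csi_size (csi_jump n lam s0 \<omega> j))"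
      then have "noise_chain (csi_flagged_step n lam e) (s0, real (csi_size s0) < e) \<omega> j
          = (csi_jump n lam s0 \<omega> j, True)"
        unfolding noise_chain_csi_flagged_step by auto
      moreover have "b * (A - 4 * e) \<le> b * (csi_lyap n lam (csi_jump n lam s0 \<omega> j) - 4 * e)"
        using order_trans[OF large csi_size_csi_jump_le_lyap[OF lam n s0]] b by simp
      ultimately have "a \<le> csi_flagged_lyap n lam b e
          (noise_chain (csi_flagged_step n lam e) (s0, real (csi_size s0) < e) \<omega> j)"
        by (simp add: a_def csi_flagged_lyap_def)
      then show "\<exists>k. a \<le> csi_flagged_lyap n lam b e
          (noise_chain (csi_flagged_step n lam e) (s0, real (csi_size s0) < e) \<omega> k)" ..
    qed
  next
    show "(\<integral>\<^sup>+w. csi_flagged_lyap n lam b e (csi_flagged_step n lam e y w) \<partial>csi_marginal)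
        \<le> csi_flagged_lyap n lam b e y" if "y \<in> {y. csi_size (fst y) \<le> n}" for y
      using that by (intro nn_integral_csi_flagged_lyap_le[OF lam n b]) simp
  qed (auto simp: a_def s0 csi_flagged_step_def Let_def csi_flagged_lyap_def csi_size_csi_step_le)
  also have "\<dots> \<le> 1 / a"
    using csi_flagged_lyap_le_1[OF lam n _ s0, of b "real (csi_size s0) < e" e] b
    by (intro divide_right_mono) (auto simp: a_def)
  finally show ?thesis by (simp add: a_def exp_minus inverse_eq_divide)
qed

lemma nn_integral_exp_half_abs_exponential:
  "(\<integral>\<^sup>+x. ennreal (exp (\<bar>x\<bar> / 2)) \<partial>density lborel (exponential_density 1)) = 2"
proof -
  have "(\<integral>\<^sup>+x. ennreal (exp (\<bar>x\<bar> / 2)) \<partial>density lborel (exponential_density 1))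
      = (\<integral>\<^sup>+x. ennreal (exp (- x / 2)) * indicator {0..} x \<partial>lborel)"
    by (subst nn_integral_density)
       (auto intro!: nn_integral_cong simp: exponential_density_def ennreal_mult[symmetric]
         simp flip: exp_add split: split_indicator)
  also have "\<dots> = ennreal (0 - (- 2 * exp (- 0 / 2)))"
  proof (rule nn_integral_FTC_atLeast)
    show "((\<lambda>x. - 2 * exp (- x / 2)) has_real_derivative exp (- x / 2)) (at x)" for x :: real
      by (auto intro!: derivative_eq_intros)
    show "((\<lambda>x::real. - 2 * exp (- x / 2)) \<longlongrightarrow> 0) at_top"
      by real_asymp
  qed auto
  finally show ?thesis by simp
qed

lemma nn_integral_exp_half_sum_abs_fst:
  "(\<integral>\<^sup>+\<omega>. ennreal (exp ((\<Sum>i<m. \<bar>fst (\<omega> i)\<bar>) / 2)) \<partial>csi_space) = 2 ^ m"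
proof (induction m)
  case 0
  interpret prob_space csi_space by (rule prob_space_csi_space)
  show ?case by (simp add: emeasure_space_1)
next
  case (Suc m)
  have "(\<integral>\<^sup>+\<omega>. ennreal (exp ((\<Sum>i<Suc m. \<bar>fst (\<omega> i)\<bar>) / 2)) \<partial>csi_space)
      = (\<integral>\<^sup>+w. \<integral>\<^sup>+\<omega>. ennreal (exp (\<bar>fst w\<bar> / 2)) * ennreal (exp ((\<Sum>i<m. \<bar>fst (\<omega> i)\<bar>) / 2))
          \<partial>csi_space \<partial>csi_marginal)"
    by (subst nn_integral_csi_space_case_nat)
       (simp_all del: sum.lessThan_Suc add: sum.lessThan_Suc_shift add_divide_distrib exp_add ennreal_mult)
  also have "\<dots> = (\<integral>\<^sup>+w. ennreal (exp (\<bar>fst w\<bar> / 2)) \<partial>csi_marginal) * 2 ^ m"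
    by (simp add: nn_integral_cmult Suc.IH nn_integral_multc)
  also have "(\<integral>\<^sup>+w. ennreal (exp (\<bar>fst w\<bar> / 2)) \<partial>csi_marginal) = 2"
    by (subst nn_integral_csi_marginal_fst) (simp_all add: nn_integral_exp_half_abs_exponential)
  finally show ?case by simp
qed

lemma measure_sum_abs_fst_ge_le:
  "measure csi_space {\<omega>\<in>space csi_space. c \<le> (\<Sum>i<m. \<bar>fst (\<omega> i)\<bar>)} \<le> 2 ^ m * exp (- c / 2)"
proof -
  interpret prob_space csi_space by (rule prob_space_csi_space)
  have "emeasure csi_space {\<omega>\<in>space csi_space. c \<le> (\<Sum>i<m. \<bar>fst (\<omega> i)\<bar>)}
      \<le> ennreal (exp (- (1 / 2) * c)) * (\<integral>\<^sup>+\<omega>. ennreal (exp (1 / 2 * (\<Sum>i<m. \<bar>fst (\<omega> i)\<bar>))) * indicator (space csi_space) \<omega> \<partial>csi_space)"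
    by (rule Chernoff_ineq_nn_integral_ge) auto
  also have "\<dots> = ennreal (exp (- c / 2)) * (\<integral>\<^sup>+\<omega>. ennreal (exp ((\<Sum>i<m. \<bar>fst (\<omega> i)\<bar>) / 2)) \<partial>csi_space)"
    by (auto intro!: arg_cong2[where f = "(*)"] nn_integral_cong split: split_indicator)
  also have "\<dots> = ennreal (2 ^ m * exp (- c / 2))"
    using ennreal_power[of 2 m] by (simp add: nn_integral_exp_half_sum_abs_fst ennreal_mult mult.commute)
  finally show ?thesis by (simp add: emeasure_eq_measure ennreal_le_iff)
qed

lemma csi_time_eq_sum:
  "csi_time n lam s0 \<omega> k = (\<Sum>i<k. csi_hold n lam (csi_jump n lam s0 \<omega> i) (fst (\<omega> i)))"
  by (induction k) auto

lemma csi_size_csi_proc_le: "csi_size s0 \<le> n \<Longrightarrow> csi_size (csi_proc n lam s0 \<omega> t) \<le> n"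
  by (simp add: csi_proc_def csi_size_csi_jump_le)

lemma csi_proc_eq_csi_jump:
  assumes t: "0 < t" and pos: "0 < csi_size (csi_proc n lam s0 \<omega> t)"
  obtains j where "t < csi_time n lam s0 \<omega> (Suc j)" "csi_proc n lam s0 \<omega> t = csi_jump n lam s0 \<omega> j"
proof -
  have ex: "\<exists>k. t < csi_time n lam s0 \<omega> k"
    using pos by (auto simp: csi_proc_def split: if_splits)
  define K where "K = (LEAST k. t < csi_time n lam s0 \<omega> k)"
  have K: "t < csi_time n lam s0 \<omega> K" unfolding K_def by (rule LeastI_ex[OF ex])
  then obtain j where "K = Suc j" using t by (cases K) auto
  moreover have "csi_proc n lam s0 \<omega> t = csi_jump n lam s0 \<omega> (K - 1)"
    using ex by (simp add: csi_proc_def K_def)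
  ultimately show ?thesis using K that by simp
qed

lemma csi_hold_le:
  assumes "0 \<le> lam" "csi_size s \<le> n" "0 < e" "e \<le> real (csi_size s)"
  shows "csi_hold n lam s x \<le> \<bar>x\<bar> / e"
proof -
  have q: "e \<le> csi_qtot n lam s" using csi_size_le_csi_qtot[OF assms(1,2)] assms(4) by linarith
  have "x / csi_qtot n lam s \<le> \<bar>x\<bar> / csi_qtot n lam s" using q assms(3) by (intro divide_right_mono) auto
  also have "\<dots> \<le> \<bar>x\<bar> / e" using q assms(3) by (intro divide_left_mono) auto
  finally show ?thesis using q assms(3) by (simp add: csi_hold_def)
qed

text \<open>In the last case the first \<open>m\<close> jumps all leave states of size, hence of total rate, at least
  \<open>e\<close>, so they happen before time \<open>(\<Sum>i<m. \<bar>E\<^sub>i\<bar>) / e\<close>.\<close>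
lemma csi_proc_large_cases:
  assumes lam: "0 \<le> lam" and s0: "csi_size s0 \<le> n" and t: "0 < t" "T \<le> t" and A: "0 < A" and e: "0 < e"
    and large: "A \<le> real (csi_size (csi_proc n lam s0 \<omega> t))"
  shows "(\<exists>j\<ge>m. A \<le> real (csi_size (csi_jump n lam s0 \<omega> j)))
    \<or> (\<exists>j. (\<exists>i\<le>j. real (csi_size (csi_jump n lam s0 \<omega> i)) < e) \<and> A \<le> real (csi_size (csi_jump n lam s0 \<omega> j)))
    \<or> T * e \<le> (\<Sum>i<m. \<bar>fst (\<omega> i)\<bar>)"
proof -
  let ?X = "csi_jump n lam s0 \<omega>"
  have "0 < csi_size (csi_proc n lam s0 \<omega> t)" using large A by linarith
  then obtain j where j: "t < csi_time n lam s0 \<omega> (Suc j)" "csi_proc n lam s0 \<omega> t = ?X j"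
    by (rule csi_proc_eq_csi_jump[OF t(1)])
  have Xj: "A \<le> real (csi_size (?X j))" using large j(2) by simp
  have "m \<le> j \<or> (\<exists>i\<le>j. real (csi_size (?X i)) < e) \<or> (j < m \<and> (\<forall>i\<le>j. e \<le> real (csi_size (?X i))))"
    by (auto simp: not_less)
  moreover have "T * e \<le> (\<Sum>i<m. \<bar>fst (\<omega> i)\<bar>)" if "j < m" "\<forall>i\<le>j. e \<le> real (csi_size (?X i))"
  proof -
    have "T < csi_time n lam s0 \<omega> (Suc j)" using j(1) t(2) by linarith
    also have "\<dots> \<le> (\<Sum>i<Suc j. \<bar>fst (\<omega> i)\<bar> / e)"
      unfolding csi_time_eq_sum using that lam s0 e
      by (intro sum_mono csi_hold_le csi_size_csi_jump_le) auto
    also have "\<dots> \<le> (\<Sum>i<m. \<bar>fst (\<omega> i)\<bar> / e)"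
      using that e by (intro sum_mono2) auto
    finally show ?thesis using e by (simp add: sum_divide_distrib[symmetric] less_divide_eq)
  qed
  ultimately show ?thesis using Xj by blast
qed

lemma measure_csi_proc_large_after_le:
  assumes lam: "0 < lam" "lam < 4" and n: "0 < n" and s0: "csi_size s0 \<le> n"
    and b: "0 < b" "b \<le> lyap_exponent lam" and e: "0 < e" "8 * e \<le> A"
    and m: "csi_lyap n lam s0 \<le> lyap_decay lam * real m" and T: "0 < T" "4 * real m \<le> T * e"
    and E: "E \<subseteq> {\<omega>\<in>space csi_space. \<exists>t\<ge>T. A \<le> real (csi_size (csi_proc n lam s0 \<omega> t))}"
  shows "measure csi_space E \<le> exp (- (b * A)) + exp (- (b * A / 2)) + exp (- real m)"
proof -
  interpret prob_space csi_space by (rule prob_space_csi_space)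
  let ?X = "csi_jump n lam s0"
  define EA where "EA = {\<omega>\<in>space csi_space. \<exists>k\<ge>m. A \<le> real (csi_size (?X \<omega> k))}"
  define EU where "EU = {\<omega>\<in>space csi_space. \<exists>j. (\<exists>i\<le>j. real (csi_size (?X \<omega> i)) < e)
        \<and> A \<le> real (csi_size (?X \<omega> j))}"
  define ET where "ET = {\<omega>\<in>space csi_space. T * e \<le> (\<Sum>i<m. \<bar>fst (\<omega> i)\<bar>)}"
  have sets: "EA \<in> sets csi_space" "EU \<in> sets csi_space" "ET \<in> sets csi_space"
    unfolding EA_def EU_def ET_def by measurable
  have A: "0 < A" using e by linarith
  have "E \<subseteq> EA \<union> EU \<union> ET"
  proof
    fix \<omega> assume "\<omega> \<in> E"
    then obtain t where "\<omega> \<in> space csi_space" "T \<le> t" "A \<le> real (csi_size (csi_proc n lam s0 \<omega> t))"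
      using E by blast
    then show "\<omega> \<in> EA \<union> EU \<union> ET"
      using csi_proc_large_cases[OF _ s0 _ _ A e(1), where t = t and \<omega> = \<omega> and m = m] lam T
      unfolding EA_def EU_def ET_def by auto
  qed
  then have "measure csi_space E \<le> measure csi_space (EA \<union> EU \<union> ET)"
    using sets by (intro finite_measure_mono) auto
  also have "\<dots> \<le> measure csi_space EA + measure csi_space EU + measure csi_space ET"
    using sets by (intro order_trans[OF measure_Un_le] add_mono measure_Un_le) auto
  also have "measure csi_space EA \<le> exp (- (b * A))"
  proof -
    have "b * (csi_lyap n lam s0 - lyap_decay lam * real m) \<le> 0"
      using m b by (intro mult_nonneg_nonpos) auto
    then have "b * (csi_lyap n lam s0 - A - lyap_decay lam * real m) \<le> - (b * A)"
      by (simp add: algebra_simps)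
    then show ?thesis
      using measure_csi_jump_late_large_le[OF lam n s0 b A, of m] unfolding EA_def
      by (meson exp_le_cancel_iff order_trans)
  qed
  also have "measure csi_space EU \<le> exp (- (b * A / 2))"
  proof -
    have "b * (4 * e - A / 2) \<le> 0" using e b by (intro mult_nonneg_nonpos) auto
    then have "- (b * (A - 4 * e)) \<le> - (b * A / 2)" by (simp add: algebra_simps)
    then show ?thesis
      using measure_csi_jump_revival_le[OF lam n s0 b, of e A] unfolding EU_def
      by (meson exp_le_cancel_iff order_trans)
  qed
  also have "measure csi_space ET \<le> exp (- real m)"
  proof -
    have "measure csi_space ET \<le> 2 ^ m * exp (- (T * e) / 2)"
      unfolding ET_def by (rule measure_sum_abs_fst_ge_le)
    also have "\<dots> \<le> exp 1 ^ m * exp (- 2 * real m)"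
      using T exp_ge_add_one_self[of 1] by (intro mult_mono power_mono) auto
    also have "\<dots> = exp (- real m)" by (simp flip: exp_of_nat_mult exp_add)
    finally show ?thesis .
  qed
  finally show ?thesis by simp
qed

lemma csi_proc_large_after_exp_rare:
  assumes lam: "0 < lam" "lam < 4" and \<alpha>: "0 < \<alpha>"
  obtains T c :: real where "0 < T" "0 < c"
    "\<And>n E. 1 \<le> n \<Longrightarrow>
       E \<subseteq> {\<omega>\<in>space csi_space. \<exists>t\<ge>T. \<alpha> * real n \<le> real (csi_size (csi_proc n lam (n, 0) \<omega> t))} \<Longrightarrow>
       measure csi_space E \<le> 3 * exp (- (c * real n))"
proof
  define b where "b = lyap_exponent lam"
  define d where "d = lyap_decay lam"
  have b: "0 < b" and d: "0 < d" "d \<le> 1"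
    using lyap_constants_pos[OF lam] by (simp_all add: b_def d_def)
  show T: "0 < 32 * (2 / d + 1) / \<alpha>" using d \<alpha> by (intro divide_pos_pos mult_pos_pos add_pos_pos) auto
  show c: "0 < min (b * \<alpha> / 2) 1" using b \<alpha> by simp
  fix n :: nat and E assume n: "1 \<le> n"
    and E: "E \<subseteq> {\<omega>\<in>space csi_space. \<exists>t\<ge>32 * (2 / d + 1) / \<alpha>.
       \<alpha> * real n \<le> real (csi_size (csi_proc n lam (n, 0) \<omega> t))}"
  define m where "m = nat \<lceil>2 * real n / d\<rceil>"
  have m: "2 * real n / d \<le> real m" "real m \<le> 2 * real n / d + 1" "real n \<le> real m"
  proof -
    show m1: "2 * real n / d \<le> real m" unfolding m_def by linarith
    have "0 \<le> 2 * real n / d" using d by simp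
    then show "real m \<le> 2 * real n / d + 1" unfolding m_def by linarith
    have "2 * real n \<le> 2 * real n / d" using d by (simp add: le_divide_eq mult_left_le)
    then show "real n \<le> real m" using m1 by linarith
  qed
  have "measure csi_space E \<le> exp (- (b * (\<alpha> * real n))) + exp (- (b * (\<alpha> * real n) / 2)) + exp (- real m)"
  proof (rule measure_csi_proc_large_after_le[OF lam _ _ _ _ _ _ _ T _ E, unfolded b_def[symmetric]])
    show "csi_lyap n lam (n, 0) \<le> lyap_decay lam * real m"
      using m(1) n d by (simp add: csi_lyap_initial d_def field_simps)
    have "real m \<le> (2 / d + 1) * real n" using m(2) n d by (simp add: algebra_simps)
    moreover have "32 * (2 / d + 1) / \<alpha> * (\<alpha> * real n / 8) = 4 * ((2 / d + 1) * real n)"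
      using \<alpha> by simp
    ultimately show "4 * real m \<le> 32 * (2 / d + 1) / \<alpha> * (\<alpha> * real n / 8)" by linarith
  qed (use n b \<alpha> in \<open>auto simp: b_def\<close>)
  also have "\<dots> \<le> 3 * exp (- (min (b * \<alpha> / 2) 1 * real n))"
  proof -
    let ?c = "min (b * \<alpha> / 2) 1"
    have "?c * real n \<le> b * \<alpha> / 2 * real n" "?c * real n \<le> 1 * real n"
      by (intro mult_right_mono; simp)+
    moreover have "0 \<le> b * \<alpha> / 2 * real n" using b \<alpha> by simp
    ultimately have "?c * real n \<le> b * (\<alpha> * real n)" "?c * real n \<le> b * (\<alpha> * real n) / 2"
      "?c * real n \<le> real m"
      using m(3) by (simp_all add: algebra_simps)
    then show ?thesis by (smt (verit) exp_le_cancel_iff)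
  qed
  finally show "measure csi_space E \<le> 3 * exp (- (min (b * \<alpha> / 2) 1 * real n))" .
qed

lemma SUP_nat_div_attained:
  fixes g :: "'a \<Rightarrow> nat"
  assumes "\<And>t. g t \<le> n" "I \<noteq> {}" "c \<le> (SUP t\<in>I. real (g t) / real n)"
  shows "\<exists>t\<in>I. c \<le> real (g t) / real n"
proof -
  let ?V = "(\<lambda>t. real (g t) / real n) ` I"
  have "?V \<subseteq> (\<lambda>k. real k / real n) ` {..n}" using assms(1) by auto
  then have "finite ?V" by (rule finite_subset) simp
  then have "Sup ?V \<in> ?V" using assms(2) by (simp add: cSup_eq_Max)
  then show ?thesis using assms(3) by auto
qed

lemma exp_neg_le_inverse_sqrt:
  fixes c x :: real
  assumes "0 < c" "1 \<le> x"
  shows "exp (- (c * x)) \<le> 1 / (c * sqrt x)"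
proof -
  have "sqrt x \<le> x" using assms(2) real_sqrt_le_iff[of x "x\<^sup>2"] by (simp add: power2_eq_square)
  then have "c * sqrt x \<le> exp (c * x)"
    using assms(1) exp_ge_add_one_self[of "c * x"] by (smt (verit) mult_left_mono)
  then show ?thesis using assms by (simp add: exp_minus field_simps)
qed

lemma csi_SUP_window_subset:
  assumes "1 \<le> n" "0 \<le> C"
  shows "{\<omega>\<in>space csi_space. \<alpha> \<le> (SUP t\<in>{0..C * sqrt (real n)}.
            real (csi_size (csi_proc n lam (n, 0) \<omega> (T + t))) / real n)}
      \<subseteq> {\<omega>\<in>space csi_space. \<exists>t\<ge>T. \<alpha> * real n \<le> real (csi_size (csi_proc n lam (n, 0) \<omega> t))}"
proof safe
  fix \<omega> assume sup: "\<alpha> \<le> (SUP t\<in>{0..C * sqrt (real n)}.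
      real (csi_size (csi_proc n lam (n, 0) \<omega> (T + t))) / real n)"
  have "{0..C * sqrt (real n)} \<noteq> {}" using assms by simp
  then obtain t where "0 \<le> t" "\<alpha> \<le> real (csi_size (csi_proc n lam (n, 0) \<omega> (T + t))) / real n"
    using SUP_nat_div_attained[OF csi_size_csi_proc_le _ sup] by auto
  then show "\<exists>t'\<ge>T. \<alpha> * real n \<le> real (csi_size (csi_proc n lam (n, 0) \<omega> t'))"
    using assms by (intro exI[of _ "T + t"]) (simp add: le_divide_eq)
qed

theorem lemma5p1:
  fixes lam \<theta> :: real
  assumes "0 < lam" and "lam < 4" and "0 < \<theta>" and "\<theta> < 1"
  shows "\<exists>T1 > 0. \<exists>N2::nat. \<exists>C2 > 0. \<exists>C3::real. \<forall>n::nat \<ge> N2.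
     measure csi_space
       {\<omega> \<in> space csi_space.
          (SUP t\<in>{0..C2 * sqrt (real n)}.
             real (fst (csi_proc n lam (n, 0) \<omega> (T1 + t)) + snd (csi_proc n lam (n, 0) \<omega> (T1 + t)))
             / real n)
          \<ge> \<theta> / ((3 + \<theta>) * lam)}
     \<le> C3 / sqrt (real n)"
proof -
  define \<alpha> where "\<alpha> = \<theta> / ((3 + \<theta>) * lam)"
  have "0 < \<alpha>" using assms by (simp add: \<alpha>_def)
  then obtain T c where T: "0 < T" and c: "0 < c" and rare: "\<And>n E. 1 \<le> n \<Longrightarrow>
       E \<subseteq> {\<omega>\<in>space csi_space. \<exists>t\<ge>T. \<alpha> * real n \<le> real (csi_size (csi_proc n lam (n, 0) \<omega> t))} \<Longrightarrow>
       measure csi_space E \<le> 3 * exp (- (c * real n))"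
    using csi_proc_large_after_exp_rare[OF assms(1,2)] by blast
  have "\<forall>n\<ge>1. measure csi_space {\<omega>\<in>space csi_space. \<alpha> \<le> (SUP t\<in>{0..1 * sqrt (real n)}.
      real (csi_size (csi_proc n lam (n, 0) \<omega> (T + t))) / real n)} \<le> 3 / c / sqrt (real n)"
  proof safe
    fix n :: nat assume n: "1 \<le> n"
    have "measure csi_space {\<omega>\<in>space csi_space. \<alpha> \<le> (SUP t\<in>{0..1 * sqrt (real n)}.
        real (csi_size (csi_proc n lam (n, 0) \<omega> (T + t))) / real n)} \<le> 3 * exp (- (c * real n))"
      by (rule rare[OF n csi_SUP_window_subset[OF n]]) simp
    also have "\<dots> \<le> 3 / c / sqrt (real n)"
      using exp_neg_le_inverse_sqrt[OF c, of n] n by simp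
    finally show "measure csi_space {\<omega>\<in>space csi_space. \<alpha> \<le> (SUP t\<in>{0..1 * sqrt (real n)}.
        real (csi_size (csi_proc n lam (n, 0) \<omega> (T + t))) / real n)} \<le> 3 / c / sqrt (real n)" .
  qed
  then show ?thesis unfolding \<alpha>_def using T zero_less_one by blast
qed

end
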